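(* Let $S=\{p_1,\dots,p_n\}$ be a set of $n$ distinct primes and let $f_1,\dots,f_n\in\mathcal{V}$ be nonzero. Then $f_1\otimes\cdots\otimes f_n$ is an eigenfunction of $\mathbf{U}_S$ if and only if each $f_j$ is a simultaneous eigenfunction of all Hecke operators $U_q$, $q\ge2$.
   Context: For a power series $f(x)=\sum_{n\ge0}a_nx^n$ and a positive integer $q$, $U_qf(x)=\sum_{n\ge0}a_{qn}x^n$. For $k\in\mathbb{N}=\{0,1,2,\dots\}$ let $\phi_k(x)=(x\frac{d}{dx})^k\big(\frac{1}{1-x}\big)$, and let $\mathcal{V}$ be the complex span of $\phi_0,\phi_1,\dots$. Let $\mathcal{H}^n=\mathcal{V}\otimes\cdots\otimes\mathcal{V}$ ($n$ factors), where $f_1\otimes\cdots\otimes f_n$ is identified with the function $f_1(x_1)\cdots f_n(x_n)$. The operator $\mathbf{U}_S=U_{p_1}\otimes\cdots\otimes U_{p_n}$ is defined by $\mathbf{U}_S(f_1\otimes\cdots\otimes f_n)(x_1,\dots,x_n)=(U_{p_1}f_1)(x_1)\cdots(U_{p_n}f_n)(x_n)$, extended linearly; $F$ is an eigenfunction of $\mathbf{U}_S$ if $F\neq0$ and $\mathbf{U}_SF=\lambda F$ for some constant $\lambda$. *)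

theory Defs
  imports "HOL-Computational_Algebra.Computational_Algebra"
begin

definition Uq :: "nat \<Rightarrow> complex fps \<Rightarrow> complex fps" where
  "Uq q f = Abs_fps (\<lambda>n. fps_nth f (q * n))"

definition theta :: "complex fps \<Rightarrow> complex fps" where
  "theta f = fps_X * fps_deriv f"

definition phi :: "nat \<Rightarrow> complex fps" where
  "phi k = (theta ^^ k) (inverse (1 - fps_X))"

definition V :: "complex fps set" where
  "V = {g. \<exists>(c :: nat \<Rightarrow> complex) N. g = (\<Sum>k<N. fps_const (c k) * phi k)}"

definition hecke_eigen :: "complex fps \<Rightarrow> bool" where
  "hecke_eigen f \<longleftrightarrow> f \<noteq> 0 \<and> (\<forall>q\<ge>2. \<exists>\<mu>. Uq q f = fps_const \<mu> * f)"

text \<open>Functions of n variables x_0..x_{n-1} as multivariate coefficient families,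
  indexed by exponent vectors m :: nat => nat (only m j for j < n is relevant).\<close>
definition tensor :: "nat \<Rightarrow> (nat \<Rightarrow> complex fps) \<Rightarrow> ((nat \<Rightarrow> nat) \<Rightarrow> complex)" where
  "tensor n f = (\<lambda>m. \<Prod>j<n. fps_nth (f j) (m j))"

definition US :: "(nat \<Rightarrow> nat) \<Rightarrow> ((nat \<Rightarrow> nat) \<Rightarrow> complex) \<Rightarrow> ((nat \<Rightarrow> nat) \<Rightarrow> complex)" where
  "US p F = (\<lambda>m. F (\<lambda>j. p j * m j))"

definition eigenfunction :: "(nat \<Rightarrow> nat) \<Rightarrow> ((nat \<Rightarrow> nat) \<Rightarrow> complex) \<Rightarrow> bool" where
  "eigenfunction p F \<longleftrightarrow> F \<noteq> (\<lambda>_. 0) \<and> (\<exists>c. US p F = (\<lambda>m. c * F m))"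

end

theory Submission
  imports Defs
begin

text \<open>The coefficients of an element of V are a polynomial P(m) in the index m. If
  f_1 (x) ... (x) f_n is an eigenfunction of U_S, freezing all variables but x_j at indices
  where the other factors do not vanish shows that f_j alone is an eigenfunction of U_{p_j};
  thus P(p_j m) = \<mu> P(m) for all m, so P(p_j x) = \<mu> P(x) as polynomials, which forces P to be
  a monomial a x^k, i.e. f_j = a \<phi>_k. Every \<phi>_k is an eigenfunction of each U_q, with
  eigenvalue q^k.\<close>

lemma poly_eq_0_if_nat_roots:
  fixes P :: "'a::{idom,ring_char_0} poly"
  assumes "\<And>m::nat. poly P (of_nat m) = 0"
  shows "P = 0"
proof (rule ccontr)
  assume "P \<noteq> 0"
  then have "finite {x. poly P x = 0}" by (rule poly_roots_finite)
  moreover have "range (of_nat :: nat \<Rightarrow> 'a) \<subseteq> {x. poly P x = 0}" using assms by auto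
  ultimately show False
    using finite_subset range_inj_infinite[OF inj_of_nat] by blast
qed

lemma poly_pcompose_dilation:
  "poly (pcompose P [:0, c:]) x = poly P (c * x)" for P :: "'a::comm_ring poly"
  by (simp add: poly_pcompose mult.commute)

lemma poly_nonzero_at_nat_multiple:
  fixes P :: "'a::{idom,ring_char_0} poly"
  assumes "P \<noteq> 0" "q > 0"
  shows "\<exists>m::nat. poly P (of_nat (q * m)) \<noteq> 0"
proof (rule ccontr)
  assume "\<not> ?thesis"
  then have "pcompose P [:0, of_nat q:] = 0"
    by (intro poly_eq_0_if_nat_roots) (simp add: poly_pcompose_dilation flip: of_nat_mult)
  with assms show False by (simp add: pcompose_eq_0_iff)
qed

lemma poly_dilation_eigen_imp_monom:
  fixes P :: "'a::{idom,ring_char_0} poly"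
  assumes "q \<ge> 2" "\<And>m::nat. poly P (of_nat (q * m)) = \<mu> * poly P (of_nat m)"
  shows "\<exists>a k. P = monom a k"
proof (cases "P = 0")
  case True
  then show ?thesis by (metis monom_eq_0)
next
  case False
  have "pcompose P [:0, of_nat q:] - smult \<mu> P = 0"
    by (intro poly_eq_0_if_nat_roots) (simp add: poly_pcompose_dilation assms(2) flip: of_nat_mult)
  then have coeff_eq: "(of_nat q ^ i - \<mu>) * coeff P i = 0" for i
    by (metis coeff_diff coeff_pcompose_linear coeff_smult coeff_0 left_diff_distrib)
  obtain k where k: "coeff P k \<noteq> 0" using False by (meson leading_coeff_neq_0)
  then have \<mu>: "\<mu> = of_nat q ^ k" using coeff_eq[of k] by simp
  have "coeff P i = 0" if "i \<noteq> k" for i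
  proof -
    have "q ^ i \<noteq> q ^ k" using that assms(1) by (simp add: power_inject_exp)
    then have "(of_nat q ^ i :: 'a) \<noteq> of_nat q ^ k" by (metis of_nat_eq_iff of_nat_power)
    then show ?thesis using coeff_eq[of i] \<mu> by simp
  qed
  then have "P = monom (coeff P k) k" by (intro poly_eqI) (auto simp: coeff_monom)
  then show ?thesis by blast
qed

lemma inverse_one_minus_fps_X: "inverse (1 - fps_X :: 'a::field fps) = Abs_fps (\<lambda>_. 1)"
  by (simp add: fps_inverse_def fps_lr_inverse_one_minus_fps_X(2))

lemma theta_nth: "theta f $ n = of_nat n * f $ n"
  unfolding theta_def by (cases n) auto

lemma phi_nth: "phi k $ n = of_nat n ^ k"
  by (induction k) (simp_all add: phi_def inverse_one_minus_fps_X theta_nth)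

lemma Uq_nth: "Uq q f $ n = f $ (q * n)"
  by (simp add: Uq_def)

lemma hecke_eigen_phi:
  assumes "a \<noteq> 0"
  shows "hecke_eigen (fps_const a * phi k)"
proof -
  have "(fps_const a * phi k) $ 1 \<noteq> 0" using assms by (simp add: phi_nth)
  moreover have "Uq q (fps_const a * phi k) = fps_const (of_nat q ^ k) * (fps_const a * phi k)" for q
    by (simp add: fps_eq_iff Uq_nth phi_nth power_mult_distrib)
  ultimately show ?thesis unfolding hecke_eigen_def by (metis fps_nonzero_nth)
qed

lemma V_nth_poly:
  assumes "g \<in> V"
  obtains P where "\<And>m. g $ m = poly P (of_nat m)"
proof -
  obtain c N where "g = (\<Sum>k<N. fps_const (c k) * phi k)"
    using assms unfolding V_def by blast
  then have "g $ m = poly (\<Sum>k<N. monom (c k) k) (of_nat m)" for m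
    by (simp add: fps_sum_nth phi_nth poly_sum poly_monom)
  then show ?thesis by (rule that)
qed

lemma V_nonzero_nth_mult:
  assumes "g \<in> V" "g \<noteq> 0" "q > 0"
  shows "\<exists>m. g $ (q * m) \<noteq> 0"
proof -
  obtain P where P: "\<And>m. g $ m = poly P (of_nat m)"
    using V_nth_poly[OF assms(1)] by blast
  have "P \<noteq> 0" using assms(2) by (auto simp: fps_eq_iff P)
  then show ?thesis using poly_nonzero_at_nat_multiple assms(3) by (simp add: P)
qed

lemma V_Uq_eigen_imp_phi:
  assumes "g \<in> V" "q \<ge> 2" "Uq q g = fps_const \<mu> * g"
  shows "\<exists>a k. g = fps_const a * phi k"
proof -
  obtain P where P: "\<And>m. g $ m = poly P (of_nat m)"
    using V_nth_poly[OF assms(1)] by blast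
  have "poly P (of_nat (q * m)) = \<mu> * poly P (of_nat m)" for m
    using arg_cong[OF assms(3), of "\<lambda>f. f $ m"] by (simp add: Uq_nth P)
  then obtain a k where "P = monom a k"
    using poly_dilation_eigen_imp_monom assms(2) by blast
  then have "g = fps_const a * phi k"
    by (simp add: fps_eq_iff P phi_nth poly_monom)
  then show ?thesis by blast
qed

lemma tensor_nonzero:
  assumes "\<forall>j<n. f j \<noteq> 0"
  shows "tensor n f \<noteq> (\<lambda>_. 0)"
proof -
  have "\<forall>j<n. \<exists>m. f j $ m \<noteq> 0" using assms fps_nonzero_nth by blast
  then obtain t where "\<forall>j<n. f j $ t j \<noteq> 0" by metis
  then have "tensor n f t \<noteq> 0" by (simp add: tensor_def)
  then show ?thesis by metis
qed

lemma eigenfunction_tensorI: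
  assumes "\<forall>j<n. f j \<noteq> 0" and "\<forall>j<n. Uq (p j) (f j) = fps_const (\<mu> j) * f j"
  shows "eigenfunction p (tensor n f)"
proof -
  have "f j $ (p j * m) = \<mu> j * f j $ m" if "j < n" for j m
    using arg_cong[OF assms(2)[rule_format, OF that], of "\<lambda>g. g $ m"] by (simp add: Uq_nth)
  then have "US p (tensor n f) = (\<lambda>m. (\<Prod>j<n. \<mu> j) * tensor n f m)"
    by (simp add: fun_eq_iff US_def tensor_def prod.distrib)
  then show ?thesis using tensor_nonzero[OF assms(1)] by (auto simp: eigenfunction_def)
qed

lemma eigenfunction_tensorD:
  assumes eig: "eigenfunction p (tensor n f)"
    and t: "\<forall>i<n. f i $ (p i * t i) \<noteq> 0"
    and j: "j < n"
  shows "\<exists>\<mu>. Uq (p j) (f j) = fps_const \<mu> * f j"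
proof -
  obtain c where c: "\<And>m. (\<Prod>i<n. f i $ (p i * m i)) = c * (\<Prod>i<n. f i $ m i)"
    using eig by (auto simp: eigenfunction_def US_def tensor_def fun_eq_iff)
  define others :: "(nat \<Rightarrow> complex) \<Rightarrow> complex" where
    "others g = (\<Prod>i\<in>{..<n}-{j}. g i)" for g
  have split: "(\<Prod>i<n. g i) = g j * others g" for g
    using j by (simp add: others_def prod.remove)
  define A where "A = others (\<lambda>i. f i $ (p i * t i))"
  define B where "B = others (\<lambda>i. f i $ t i)"
  have "A \<noteq> 0" using t by (simp add: A_def others_def)
  have "f j $ (p j * x) * A = c * (f j $ x * B)" for x
  proof -
    have "others (\<lambda>i. f i $ (p i * (t(j := x)) i)) = A"
         "others (\<lambda>i. f i $ (t(j := x)) i) = B"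
      by (simp_all add: A_def B_def others_def)
    then show ?thesis using c[of "t(j := x)"] by (simp add: split)
  qed
  then have "Uq (p j) (f j) = fps_const (c * B / A) * f j"
    using \<open>A \<noteq> 0\<close> by (simp add: fps_eq_iff Uq_nth field_simps)
  then show ?thesis by blast
qed

theorem mainTheorem17:
  fixes n :: nat and p :: "nat \<Rightarrow> nat" and f :: "nat \<Rightarrow> complex fps"
  assumes "\<forall>j<n. prime (p j)"
    and "inj_on p {..<n}"
    and "\<forall>j<n. f j \<in> V \<and> f j \<noteq> 0"
  shows "eigenfunction p (tensor n f) \<longleftrightarrow> (\<forall>j<n. hecke_eigen (f j))"
proof
  assume eig: "eigenfunction p (tensor n f)"
  have "\<forall>j<n. \<exists>m. f j $ (p j * m) \<noteq> 0"
    using assms(1,3) V_nonzero_nth_mult prime_gt_0_nat by blast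
  then obtain t where t: "\<forall>j<n. f j $ (p j * t j) \<noteq> 0" by metis
  show "\<forall>j<n. hecke_eigen (f j)"
  proof (intro allI impI)
    fix j assume "j < n"
    then obtain \<mu> where "Uq (p j) (f j) = fps_const \<mu> * f j"
      using eigenfunction_tensorD[OF eig t] by blast
    then obtain a k where fj: "f j = fps_const a * phi k"
      using V_Uq_eigen_imp_phi assms(1,3) prime_ge_2_nat \<open>j < n\<close> by blast
    then have "a \<noteq> 0" using assms(3) \<open>j < n\<close> by auto
    then show "hecke_eigen (f j)" unfolding fj by (rule hecke_eigen_phi)
  qed
next
  assume "\<forall>j<n. hecke_eigen (f j)"
  then have "\<forall>j<n. \<exists>\<mu>. Uq (p j) (f j) = fps_const \<mu> * f j"
    using assms(1) prime_ge_2_nat unfolding hecke_eigen_def by blast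
  then obtain \<mu> where "\<forall>j<n. Uq (p j) (f j) = fps_const (\<mu> j) * f j" by metis
  then show "eigenfunction p (tensor n f)"
    using assms(3) by (intro eigenfunction_tensorI) auto
qed

end
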